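(* For every DBI normal formula $\varphi$ and every pointed Kripke model $(\mathcal{M},v)$, the pointed update of $(\mathcal{M},v)$ with $(\mathcal{U}_\varphi,0)$ is defined and $\bigl(\mathcal{M}\odot\mathcal{U}_\varphi,(v,0)\bigr)$ is weakly privatized with respect to $\varphi$.
   Context: Agents $\mathcal{A}=\{1,\dots,n\}$, $n>1$; language $\mathcal{L}$: $\varphi ::= p \mid \neg\varphi \mid (\varphi\wedge\varphi)\mid B_i\varphi$, $\top$ the usual tautology. Kripke model $\mathcal{M}=\langle S,R,V\rangle$ (nonempty $S$, $R_i\subseteq S\times S$, $V:\mathit{Prop}\to 2^S$), standard truth. Action model $\mathcal{U}=\langle E,Q,\mathsf{pre}\rangle$ (nonempty $E$, $Q_i\subseteq E\times E$, $\mathsf{pre}:E\to\mathcal{L}$). Frame properties apply to models via their underlying frames. Pointed update of $(\mathcal{M},w)$ with $(\mathcal{U},\alpha)$, defined iff $\mathcal{M},w\vDash\mathsf{pre}(\alpha)$: with $T=\{(x,\beta)\in S\times E\mid\mathcal{M},x\vDash\mathsf{pre}(\beta)\}$, $\mathcal{M}\odot\mathcal{U}=\langle S^{\mathcal U},R^{\mathcal U},V^{\mathcal U}\rangle$ where $S^{\mathcal U}$ is the smallest subset of $T$ containing $(w,\alpha)$ closed under: $(x,\beta)\in S^{\mathcal U}$, $(u,\gamma)\in T$, $xR_iu$, $\beta Q_i\gamma$ imply $(u,\gamma)\in S^{\mathcal U}$; $R^{\mathcal U}_i$ relates $(x,\beta),(u,\gamma)\in S^{\mathcal U}$ iff $xR_iu$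 and $\beta Q_i\gamma$; $V^{\mathcal U}(p)=\{(x,\beta)\in S^{\mathcal U}\mid x\in V(p)\}$. Target agents: $\mathsf{ta}(p)=\varnothing$, $\mathsf{ta}(\neg\phi)=\mathsf{ta}(\phi)$, $\mathsf{ta}(\phi\wedge\psi)=\mathsf{ta}(\phi)\cup\mathsf{ta}(\psi)$, $\mathsf{ta}(B_i\phi)=\{i\}$. DBI formulas: $\varphi ::= B_i\xi \mid B_i(\xi\wedge\varphi)\mid(\varphi\wedge\varphi)\mid B_i\varphi$, $\xi$ purely propositional. DBI normal: $B_i\xi$ always; $B_i\varphi$, $B_i(\xi\wedge\varphi)$ iff $\varphi$ DBI normal and $i\notin\mathsf{ta}(\varphi)$; $\varphi\wedge\psi$ iff both DBI normal and $\mathsf{ta}(\varphi)\cap\mathsf{ta}(\psi)=\varnothing$. Action model $\mathcal{U}_\varphi=\langle E^\varphi,Q^\varphi,\mathsf{pre}^\varphi\rangle$ for DBI normal $\varphi$, recursively; always $E^\varphi=\{0,-1\}\sqcup D^\varphi$, $\varnothing\ne D^\varphi\subseteq\{1,2,\dots\}$, $\mathsf{pre}^\varphi(0)=\mathsf{pre}^\varphi(-1)=\top$; $\underline{Q}_j:=Q_j\cap((E\setminus\{0\})\times(E\setminus\{0\}))$. (1) $\varphi=B_i\xi$: $D=\{m\}$, $\mathsf{pre}(m)=\xi$, $Q_j=\{(0,-1),(m,-1),(-1,-1)\}$ ($j\ne i$), $Q_i=\{(0,m),(m,m),(-1,-1)\}$. (2) $\varphi=B_i\psi$: fresh $m\ge1$,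 $m\notin D^\psi$; $D^\varphi=D^\psi\sqcup\{m\}$; $\mathsf{pre}^\varphi$ extends $\mathsf{pre}^\psi$ with $\mathsf{pre}^\varphi(m)=\top$; $Q^\varphi_j=\underline{Q}^\psi_j\cup\{(0,-1)\}\cup\{(m,k)\mid(0,k)\in Q^\psi_j\}$ ($j\ne i$); $Q^\varphi_i=\underline{Q}^\psi_i\cup\{(0,m),(m,m)\}$. (3) $\varphi=B_i(\xi\wedge\psi)$: as (2) but $\mathsf{pre}^\varphi(m)=\xi$. (4) $\varphi=\psi\wedge\theta$: with $D^\psi\cap D^\theta=\varnothing$, $D^\varphi=D^\psi\sqcup D^\theta$, $\mathsf{pre}^\varphi=\mathsf{pre}^\psi\cup\mathsf{pre}^\theta$, $Q^\varphi_j=\underline{Q}^\psi_j\cup\underline{Q}^\theta_j\cup\{(0,k)\mid(0,k)\in Q^\psi_j\cup Q^\theta_j, k\in D^\psi\sqcup D^\theta\}\cup\{(0,-1)\mid\text{no such }k\text{ exists}\}$. Modal syntactic tree $\mathcal{T}_\varphi$: $\mathcal{T}_{B_i\xi}$ is a root with one child labeled $B_i$; $\mathcal{T}_{B_i\psi}=\mathcal{T}_{B_i(\xi\wedge\psi)}$ is obtained by labeling the root of $\mathcal{T}_\psi$ with $B_i$ and making it the only child of a new unlabeled root; $\mathcal{T}_{\psi\wedge\theta}$ is the disjoint union of $\mathcal{T}_\psi,\mathcal{T}_\theta$ with roots identified. $RootP(\varphi)$: paths from the root (length $\ge0$); $\mathsf{agSeq}(\sigma)$: agents labeling the non-root nodes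 of $\sigma$, in order. Clusters: for a frame $\mathcal{F}=\langle W,R\rangle$, $w\in W$, $C^{i_1,\dots,i_l}_{\mathcal{F},w}=\{u\mid\exists u_2,\dots,u_l:\ wR_{i_1}u_2\cdots u_lR_{i_l}u\}$, $C^\varepsilon_{\mathcal{F},w}=\{w\}$. $\mathcal{A}^l_{\mathrm{nsr}}$: agent sequences of length $l$ without two successive equal agents. $(\mathcal{F},w)$ is weakly privatized w.r.t. $\varphi$ iff for every $\sigma\in RootP(\varphi)$ and every $s\in\bigcup_{l\ge0}\mathcal{A}^l_{\mathrm{nsr}}\setminus\{\mathsf{agSeq}(\sigma)\}$, $C^{\mathsf{agSeq}(\sigma)}_{\mathcal{F},w}\cap C^s_{\mathcal{F},w}=\varnothing$. *)

theory Defs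
  imports Main
begin

text \<open>Agents are natural numbers; the agent set is {1..n} with n > 1 (a parameter).\<close>

datatype 'p fm = Prop 'p | Neg "'p fm" | Conj "'p fm" "'p fm" | Bel nat "'p fm"

text \<open>The usual tautology (any propositional letter works).\<close>
definition top :: "'p fm" where
  "top = Neg (Conj (Prop undefined) (Neg (Prop undefined)))"

fun agents :: "'p fm \<Rightarrow> nat set" where
  "agents (Prop p) = {}"
| "agents (Neg a) = agents a"
| "agents (Conj a b) = agents a \<union> agents b"
| "agents (Bel i a) = insert i (agents a)"

fun is_prop :: "'p fm \<Rightarrow> bool" where
  "is_prop (Prop p) = True"
| "is_prop (Neg a) = is_prop a"
| "is_prop (Conj a b) = (is_prop a \<and> is_prop b)"
| "is_prop (Bel i a) = False"

text \<open>Kripke semantics; a model is given by its relations R and valuation V,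
  with state space the whole (nonempty) type 's.\<close>
fun sat :: "(nat \<Rightarrow> ('s \<times> 's) set) \<Rightarrow> ('p \<Rightarrow> 's set) \<Rightarrow> 's \<Rightarrow> 'p fm \<Rightarrow> bool" where
  "sat R V w (Prop p) = (w \<in> V p)"
| "sat R V w (Neg a) = (\<not> sat R V w a)"
| "sat R V w (Conj a b) = (sat R V w a \<and> sat R V w b)"
| "sat R V w (Bel i a) = (\<forall>u. (w, u) \<in> R i \<longrightarrow> sat R V u a)"

fun ta :: "'p fm \<Rightarrow> nat set" where
  "ta (Prop p) = {}"
| "ta (Neg a) = ta a"
| "ta (Conj a b) = ta a \<union> ta b"
| "ta (Bel i a) = {i}"

inductive dbi :: "'p fm \<Rightarrow> bool" where
  "is_prop \<xi> \<Longrightarrow> dbi (Bel i \<xi>)"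
| "is_prop \<xi> \<Longrightarrow> dbi \<phi> \<Longrightarrow> dbi (Bel i (Conj \<xi> \<phi>))"
| "dbi \<phi> \<Longrightarrow> dbi \<psi> \<Longrightarrow> dbi (Conj \<phi> \<psi>)"
| "dbi \<phi> \<Longrightarrow> dbi (Bel i \<phi>)"

inductive dbi_normal :: "'p fm \<Rightarrow> bool" where
  "is_prop \<xi> \<Longrightarrow> dbi_normal (Bel i \<xi>)"
| "dbi_normal \<phi> \<Longrightarrow> i \<notin> ta \<phi> \<Longrightarrow> dbi_normal (Bel i \<phi>)"
| "is_prop \<xi> \<Longrightarrow> dbi_normal \<phi> \<Longrightarrow> i \<notin> ta \<phi> \<Longrightarrow> dbi_normal (Bel i (Conj \<xi> \<phi>))"
| "dbi_normal \<phi> \<Longrightarrow> dbi_normal \<psi> \<Longrightarrow> ta \<phi> \<inter> ta \<psi> = {} \<Longrightarrow> dbi_normal (Conj \<phi> \<psi>)"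

text \<open>An action model U_phi is represented by (D, Q, pre): events E = {0,-1} \<union> D (integers),
  D a nonempty set of positive integers, Q j the relation of agent j, pre the precondition map.
  Since the construction involves free choices of fresh labels, it is an inductive relation:
  Uphi phi D Q pre holds for every admissible outcome of the recursive construction.\<close>

definition Ev :: "int set \<Rightarrow> int set" where
  "Ev D = {0, -1} \<union> D"

definition uQ :: "int set \<Rightarrow> (nat \<Rightarrow> (int \<times> int) set) \<Rightarrow> nat \<Rightarrow> (int \<times> int) set" where
  "uQ D Q j = Q j \<inter> ((Ev D - {0}) \<times> (Ev D - {0}))"

inductive Uphi :: "'p fm \<Rightarrow> int set \<Rightarrow> (nat \<Rightarrow> (int \<times> int) set) \<Rightarrow> (int \<Rightarrow> 'p fm) \<Rightarrow> bool" where
  base: "is_prop \<xi> \<Longrightarrow> m \<ge> 1 \<Longrightarrow>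
    Uphi (Bel i \<xi>) {m}
      (\<lambda>j. if j = i then {(0, m), (m, m), (-1, -1)} else {(0, -1), (m, -1), (-1, -1)})
      (\<lambda>e. if e = m then \<xi> else top)"
| box: "Uphi \<psi> D Q pre \<Longrightarrow> m \<ge> 1 \<Longrightarrow> m \<notin> D \<Longrightarrow>
    Uphi (Bel i \<psi>) (insert m D)
      (\<lambda>j. if j = i then uQ D Q j \<union> {(0, m), (m, m)}
           else uQ D Q j \<union> {(0, -1)} \<union> {(m, k) | k. (0, k) \<in> Q j})
      (pre(m := top))"
| boxconj: "is_prop \<xi> \<Longrightarrow> Uphi \<psi> D Q pre \<Longrightarrow> m \<ge> 1 \<Longrightarrow> m \<notin> D \<Longrightarrow>
    Uphi (Bel i (Conj \<xi> \<psi>)) (insert m D)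
      (\<lambda>j. if j = i then uQ D Q j \<union> {(0, m), (m, m)}
           else uQ D Q j \<union> {(0, -1)} \<union> {(m, k) | k. (0, k) \<in> Q j})
      (pre(m := \<xi>))"
| conj: "Uphi \<psi> D1 Q1 p1 \<Longrightarrow> Uphi \<theta> D2 Q2 p2 \<Longrightarrow> D1 \<inter> D2 = {} \<Longrightarrow>
    Uphi (Conj \<psi> \<theta>) (D1 \<union> D2)
      (\<lambda>j. uQ D1 Q1 j \<union> uQ D2 Q2 j
           \<union> {(0, k) | k. (0, k) \<in> Q1 j \<union> Q2 j \<and> k \<in> D1 \<union> D2}
           \<union> (if \<exists>k. (0, k) \<in> Q1 j \<union> Q2 j \<and> k \<in> D1 \<union> D2 then {} else {(0, -1)}))
      (\<lambda>e. if e \<in> D1 then p1 e else p2 e)"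

text \<open>States of M \<odot> U reachable from (w, alpha) (the smallest subset of T containing (w,alpha)
  closed under the agents' relations); agents range over {1..n}.\<close>
inductive_set SU :: "nat \<Rightarrow> (nat \<Rightarrow> ('s \<times> 's) set) \<Rightarrow> ('p \<Rightarrow> 's set) \<Rightarrow> int set
    \<Rightarrow> (nat \<Rightarrow> (int \<times> int) set) \<Rightarrow> (int \<Rightarrow> 'p fm) \<Rightarrow> 's \<Rightarrow> int \<Rightarrow> ('s \<times> int) set"
  for n R V D Q pre w \<alpha> where
  start: "\<alpha> \<in> Ev D \<Longrightarrow> sat R V w (pre \<alpha>) \<Longrightarrow> (w, \<alpha>) \<in> SU n R V D Q pre w \<alpha>"
| step: "(x, \<beta>) \<in> SU n R V D Q pre w \<alpha> \<Longrightarrow> i \<in> {1..n} \<Longrightarrow> (x, u) \<in> R i \<Longrightarrow> (\<beta>, \<gamma>) \<in> Q i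
    \<Longrightarrow> \<gamma> \<in> Ev D \<Longrightarrow> sat R V u (pre \<gamma>) \<Longrightarrow> (u, \<gamma>) \<in> SU n R V D Q pre w \<alpha>"

definition RU :: "nat \<Rightarrow> (nat \<Rightarrow> ('s \<times> 's) set) \<Rightarrow> ('p \<Rightarrow> 's set) \<Rightarrow> int set
    \<Rightarrow> (nat \<Rightarrow> (int \<times> int) set) \<Rightarrow> (int \<Rightarrow> 'p fm) \<Rightarrow> 's \<Rightarrow> int \<Rightarrow> nat \<Rightarrow> (('s \<times> int) \<times> ('s \<times> int)) set" where
  "RU n R V D Q pre w \<alpha> i =
     {(a, b). a \<in> SU n R V D Q pre w \<alpha> \<and> b \<in> SU n R V D Q pre w \<alpha>
        \<and> (fst a, fst b) \<in> R i \<and> (snd a, snd b) \<in> Q i}"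

datatype mtree = MNode (lab: "nat option") (children: "mtree list")

fun relabel :: "nat \<Rightarrow> mtree \<Rightarrow> mtree" where
  "relabel i (MNode l cs) = MNode (Some i) cs"

fun mtreeOf :: "'p fm \<Rightarrow> mtree" where
  "mtreeOf (Bel i (Conj \<xi> \<psi>)) =
     (if is_prop (Conj \<xi> \<psi>) then MNode None [MNode (Some i) []]
      else if is_prop \<xi> then MNode None [relabel i (mtreeOf \<psi>)]
      else MNode None [relabel i (mtreeOf (Conj \<xi> \<psi>))])"
| "mtreeOf (Bel i \<phi>) =
     (if is_prop \<phi> then MNode None [MNode (Some i) []] else MNode None [relabel i (mtreeOf \<phi>)])"
| "mtreeOf (Conj \<psi> \<theta>) = MNode None (children (mtreeOf \<psi>) @ children (mtreeOf \<theta>))"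
| "mtreeOf _ = MNode None []"

inductive dpath :: "mtree \<Rightarrow> mtree list \<Rightarrow> bool" where
  "dpath t [t]"
| "c \<in> set (children t) \<Longrightarrow> dpath c p \<Longrightarrow> dpath t (t # p)"

definition RootP :: "'p fm \<Rightarrow> mtree list set" where
  "RootP \<phi> = {p. dpath (mtreeOf \<phi>) p}"

definition agSeq :: "mtree list \<Rightarrow> nat list" where
  "agSeq p = map (the \<circ> lab) (tl p)"

fun cluster :: "(nat \<Rightarrow> ('a \<times> 'a) set) \<Rightarrow> 'a \<Rightarrow> nat list \<Rightarrow> 'a set" where
  "cluster R w [] = {w}"
| "cluster R w (i # s) = (\<Union>u \<in> R i `` {w}. cluster R u s)"

definition nsr :: "nat \<Rightarrow> nat list \<Rightarrow> bool" where
  "nsr n s \<longleftrightarrow> set s \<subseteq> {1..n} \<and> (\<forall>k. Suc k < length s \<longrightarrow> s ! k \<noteq> s ! Suc k)"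

definition weakly_privatized :: "nat \<Rightarrow> (nat \<Rightarrow> ('a \<times> 'a) set) \<Rightarrow> 'a \<Rightarrow> 'p fm \<Rightarrow> bool" where
  "weakly_privatized n R w \<phi> \<longleftrightarrow>
     (\<forall>\<sigma> \<in> RootP \<phi>. \<forall>s. nsr n s \<and> s \<noteq> agSeq \<sigma> \<longrightarrow>
        cluster R w (agSeq \<sigma>) \<inter> cluster R w s = {})"

end

theory Submission
  imports Defs
begin

(* A cluster of the product at (v, 0) along an agent word s projects, in the event component,
   onto events of U_phi reached from 0 along s. The construction of U_phi preserves three
   invariants: -1 is an absorbing sink; every event other than -1 is reached from 0 by at most
   one word without successive repetitions; and the agent sequence of every root path of the
   modal tree is such a word, along which 0 never reaches -1. So if the clusters along agSeq sigma
   and along an nsr word s meet, both words reach the same event other than -1 and s = agSeq sigma. *)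

fun reach :: "(nat \<Rightarrow> (int \<times> int) set) \<Rightarrow> int \<Rightarrow> nat list \<Rightarrow> int \<Rightarrow> bool" where
  "reach Q x [] y \<longleftrightarrow> x = y"
| "reach Q x (j # s) y \<longleftrightarrow> (\<exists>z. (x, z) \<in> Q j \<and> reach Q z s y)"

lemma reach_cong_closed:
  assumes "x \<in> S"
    and closed: "\<And>j x y. x \<in> S \<Longrightarrow> (x, y) \<in> Q j \<Longrightarrow> y \<in> S"
    and agree: "\<And>j x y. x \<in> S \<Longrightarrow> (x, y) \<in> Q' j \<longleftrightarrow> (x, y) \<in> Q j"
  shows "reach Q' x s y \<longleftrightarrow> reach Q x s y"
  using assms(1) by (induction s arbitrary: x) (auto simp: agree dest: closed)

definition action_wf :: "int set \<Rightarrow> (nat \<Rightarrow> (int \<times> int) set) \<Rightarrow> bool" where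
  "action_wf D Q \<longleftrightarrow> (\<forall>x\<in>D. 1 \<le> x) \<and> (\<forall>j. Q j \<subseteq> Ev D \<times> insert (-1) D)
     \<and> (\<forall>j y. (-1, y) \<in> Q j \<longleftrightarrow> y = -1)"

lemma
  assumes "action_wf D Q"
  shows action_wf_pos: "x \<in> D \<Longrightarrow> 1 \<le> x"
    and action_wf_edge: "(x, y) \<in> Q j \<Longrightarrow> x \<in> Ev D \<and> y \<in> insert (-1) D"
    and action_wf_sink: "(-1, y) \<in> Q j \<longleftrightarrow> y = -1"
  using assms unfolding action_wf_def by blast+

lemma action_wf_notin:
  assumes "action_wf D Q"
  shows "0 \<notin> D" and "-1 \<notin> D"
  using action_wf_pos[OF assms] by force+

lemma reach_sink: "action_wf D Q \<Longrightarrow> reach Q (-1) s y \<longleftrightarrow> y = -1"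
  by (induction s) (auto simp: action_wf_sink)

lemma reach_Cons_target: "action_wf D Q \<Longrightarrow> reach Q x (j # s) y \<Longrightarrow> y \<in> insert (-1) D"
  by (induction s arbitrary: x j) (auto dest: action_wf_edge)

definition root_agents :: "(nat \<Rightarrow> (int \<times> int) set) \<Rightarrow> nat set \<Rightarrow> bool" where
  "root_agents Q T \<longleftrightarrow> (\<forall>j k. (0, k) \<in> Q j \<longrightarrow> k \<noteq> -1 \<longrightarrow> j \<in> T)"

definition labels_unique :: "(nat \<Rightarrow> (int \<times> int) set) \<Rightarrow> bool" where
  "labels_unique Q \<longleftrightarrow> (\<forall>e s t. e \<noteq> -1 \<longrightarrow> distinct_adj s \<longrightarrow> distinct_adj t
      \<longrightarrow> reach Q 0 s e \<longrightarrow> reach Q 0 t e \<longrightarrow> s = t)"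

definition live :: "(nat \<Rightarrow> (int \<times> int) set) \<Rightarrow> nat list \<Rightarrow> bool" where
  "live Q s \<longleftrightarrow> (\<exists>e. reach Q 0 s e) \<and> (\<forall>e. reach Q 0 s e \<longrightarrow> e \<noteq> -1)"

definition privatizing :: "int set \<Rightarrow> (nat \<Rightarrow> (int \<times> int) set) \<Rightarrow> nat set \<Rightarrow> nat list set \<Rightarrow> bool" where
  "privatizing D Q T A \<longleftrightarrow> action_wf D Q \<and> root_agents Q T \<and> labels_unique Q
     \<and> (\<forall>a\<in>A. distinct_adj a \<and> live Q a)"

lemma live_Nil [simp]: "live Q []"
  by (simp add: live_def)

lemma live_hd:
  assumes "action_wf D Q" "root_agents Q T" "live Q (j # s)"
  shows "j \<in> T"
proof -
  from \<open>live Q (j # s)\<close> obtain e where "reach Q 0 (j # s) e" "e \<noteq> -1"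
    unfolding live_def by blast
  then obtain z where "(0, z) \<in> Q j" "reach Q z s e" "e \<noteq> -1"
    by auto
  moreover from this have "z \<noteq> -1" using reach_sink[OF assms(1)] by blast
  ultimately show ?thesis using assms(2) unfolding root_agents_def by blast
qed

section \<open>The box construction\<close>

definition box_rel :: "int set \<Rightarrow> (nat \<Rightarrow> (int \<times> int) set) \<Rightarrow> nat \<Rightarrow> int \<Rightarrow> nat \<Rightarrow> (int \<times> int) set" where
  "box_rel D Q i m = (\<lambda>j. if j = i then uQ D Q j \<union> {(0, m), (m, m)}
     else uQ D Q j \<union> {(0, -1)} \<union> {(m, k) | k. (0, k) \<in> Q j})"

context
  fixes D :: "int set" and Q :: "nat \<Rightarrow> (int \<times> int) set" and i :: nat and m :: int
  assumes wf: "action_wf D Q" and m: "1 \<le> m" "m \<notin> D"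
begin

lemma box_rel_from_old: "x \<in> insert (-1) D \<Longrightarrow> (x, y) \<in> box_rel D Q i m j \<longleftrightarrow> (x, y) \<in> Q j"
  using m action_wf_notin[OF wf] action_wf_edge[OF wf, of x y j] action_wf_sink[OF wf]
  unfolding box_rel_def uQ_def Ev_def by auto

lemma box_rel_from_0: "(0, y) \<in> box_rel D Q i m j \<longleftrightarrow> y = (if j = i then m else -1)"
  using m unfolding box_rel_def uQ_def by auto

lemma box_rel_from_m: "(m, y) \<in> box_rel D Q i m j \<longleftrightarrow> (if j = i then y = m else (0, y) \<in> Q j)"
  using m unfolding box_rel_def uQ_def Ev_def by auto

lemma reach_box_rel_old: "x \<in> insert (-1) D \<Longrightarrow> reach (box_rel D Q i m) x s y \<longleftrightarrow> reach Q x s y"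
  by (rule reach_cong_closed[where S = "insert (-1) D"])
    (auto dest: action_wf_edge[OF wf] simp: box_rel_from_old)

lemma reach_box_rel_m: "j \<noteq> i \<Longrightarrow> reach (box_rel D Q i m) m (j # s) y \<longleftrightarrow> reach Q 0 (j # s) y"
  using reach_box_rel_old action_wf_edge[OF wf] by (auto simp: box_rel_from_m)

lemma reach_box_rel_0:
  "reach (box_rel D Q i m) 0 (j # s) y \<longleftrightarrow> (if j = i then reach (box_rel D Q i m) m s y else y = -1)"
  using reach_box_rel_old[of "-1"] reach_sink[OF wf] by (simp add: box_rel_from_0)

lemma action_wf_box_rel: "action_wf (insert m D) (box_rel D Q i m)"
proof -
  have "box_rel D Q i m j \<subseteq> Ev (insert m D) \<times> insert (-1) (insert m D)" for j
    using action_wf_edge[OF wf] unfolding box_rel_def uQ_def Ev_def by auto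
  moreover have "(-1, y) \<in> box_rel D Q i m j \<longleftrightarrow> y = -1" for j y
    using box_rel_from_old[of "-1"] action_wf_sink[OF wf] by simp
  ultimately show ?thesis
    using action_wf_pos[OF wf] m unfolding action_wf_def by auto
qed

lemma root_agents_box_rel: "root_agents (box_rel D Q i m) {i}"
  by (simp add: root_agents_def box_rel_from_0)

lemma reach_box_rel_cases:
  assumes "reach (box_rel D Q i m) 0 s e" "e \<noteq> -1" "distinct_adj s"
  shows "s = [] \<and> e = 0 \<or> s = [i] \<and> e = m
    \<or> (\<exists>t. s = i # t \<and> distinct_adj t \<and> reach Q 0 t e \<and> e \<in> D)"
proof (cases s)
  case (Cons j t)
  from assms(1) have "reach (box_rel D Q i m) 0 (j # t) e"
    unfolding Cons .
  with assms(2) have "j = i" and t: "reach (box_rel D Q i m) m t e"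
    unfolding reach_box_rel_0 by (auto split: if_splits)
  show ?thesis
  proof (cases t)
    case (Cons j' r)
    with \<open>s = j # t\<close> \<open>j = i\<close> assms(3) have "j' \<noteq> i" "distinct_adj t" by auto
    from t have "reach Q 0 t e"
      unfolding Cons reach_box_rel_m[OF \<open>j' \<noteq> i\<close>] .
    moreover from this Cons assms(2) have "e \<in> D" using reach_Cons_target[OF wf] by blast
    ultimately show ?thesis using \<open>s = j # t\<close> \<open>j = i\<close> \<open>distinct_adj t\<close> by blast
  qed (use t \<open>s = j # t\<close> \<open>j = i\<close> in simp)
qed (use assms in simp)

lemma labels_unique_box_rel:
  assumes "labels_unique Q"
  shows "labels_unique (box_rel D Q i m)"
  unfolding labels_unique_def
proof (intro allI impI)
  fix e s t
  assume "e \<noteq> -1" "distinct_adj s" "distinct_adj t"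
    and "reach (box_rel D Q i m) 0 s e" "reach (box_rel D Q i m) 0 t e"
  then have s: "s = [] \<and> e = 0 \<or> s = [i] \<and> e = m
      \<or> (\<exists>s'. s = i # s' \<and> distinct_adj s' \<and> reach Q 0 s' e \<and> e \<in> D)"
    and t: "t = [] \<and> e = 0 \<or> t = [i] \<and> e = m
      \<or> (\<exists>t'. t = i # t' \<and> distinct_adj t' \<and> reach Q 0 t' e \<and> e \<in> D)"
    using reach_box_rel_cases by blast+
  have "0 \<notin> D" "m \<noteq> 0" "m \<notin> D" using action_wf_notin[OF wf] m by auto
  from s consider "e = 0" | "e = m" | "e \<in> D" by blast
  then show "s = t"
  proof cases
    case 3
    with s t \<open>0 \<notin> D\<close> \<open>m \<notin> D\<close> obtain s' t' where
      "s = i # s'" "t = i # t'" "distinct_adj s'" "distinct_adj t'" "reach Q 0 s' e" "reach Q 0 t' e"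
      by blast
    with assms \<open>e \<noteq> -1\<close> show ?thesis unfolding labels_unique_def by blast
  qed (use s t \<open>0 \<notin> D\<close> \<open>m \<noteq> 0\<close> \<open>m \<notin> D\<close> in auto)
qed

lemma live_box_rel:
  assumes "live Q a" "a = [] \<or> hd a \<noteq> i"
  shows "live (box_rel D Q i m) (i # a)"
proof (cases a)
  case Nil
  then show ?thesis using m by (simp add: live_def box_rel_from_0)
next
  case (Cons j r)
  with assms have "reach (box_rel D Q i m) 0 (i # a) e \<longleftrightarrow> reach Q 0 a e" for e
    by (simp add: reach_box_rel_0 reach_box_rel_m del: reach.simps(2))
  then show ?thesis using assms(1) by (simp add: live_def)
qed

end

lemma privatizing_box_rel:
  assumes "privatizing D Q T A" "1 \<le> m" "m \<notin> D" "i \<notin> T"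
  shows "privatizing (insert m D) (box_rel D Q i m) {i} (insert [] ((#) i ` A))"
proof -
  have wf: "action_wf D Q" and "root_agents Q T" "labels_unique Q"
    and A: "\<forall>a\<in>A. distinct_adj a \<and> live Q a"
    using assms(1) by (simp_all add: privatizing_def)
  moreover have "a = [] \<or> hd a \<noteq> i" if "a \<in> A" for a
    using live_hd[OF wf \<open>root_agents Q T\<close>] A that assms(4) by (cases a) fastforce+
  ultimately show ?thesis
    using assms(2,3) by (auto simp: privatizing_def action_wf_box_rel root_agents_box_rel
        labels_unique_box_rel live_box_rel distinct_adj_Cons)
qed

lemma privatizing_trivial: "privatizing {} (\<lambda>_. {(0, -1), (-1, -1)}) {} {[]}"
proof -
  have wf: "action_wf {} (\<lambda>_. {(0, -1), (-1, -1)})"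
    by (auto simp: action_wf_def Ev_def)
  have "s = []" if "reach (\<lambda>_. {(0, -1), (-1, -1)}) 0 s e" "e \<noteq> -1" for s e
    using that reach_sink[OF wf] by (cases s) auto
  with wf show ?thesis
    by (auto simp: privatizing_def root_agents_def labels_unique_def)
qed

(* The base case B_i xi of U_phi is the box construction over the action model with events 0, -1 only. *)
lemma box_rel_trivial:
  "box_rel {} (\<lambda>_. {(0, -1), (-1, -1)}) i m
     = (\<lambda>j. if j = i then {(0, m), (m, m), (-1, -1)} else {(0, -1), (m, -1), (-1, -1)})"
  by (rule ext) (auto simp: box_rel_def uQ_def Ev_def)

section \<open>The conjunction construction\<close>

definition conj_rel :: "int set \<Rightarrow> (nat \<Rightarrow> (int \<times> int) set) \<Rightarrow> int set \<Rightarrow> (nat \<Rightarrow> (int \<times> int) set)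
    \<Rightarrow> nat \<Rightarrow> (int \<times> int) set" where
  "conj_rel D1 Q1 D2 Q2 = (\<lambda>j. uQ D1 Q1 j \<union> uQ D2 Q2 j
     \<union> {(0, k) | k. (0, k) \<in> Q1 j \<union> Q2 j \<and> k \<in> D1 \<union> D2}
     \<union> (if \<exists>k. (0, k) \<in> Q1 j \<union> Q2 j \<and> k \<in> D1 \<union> D2 then {} else {(0, -1)}))"

lemma conj_rel_commute: "conj_rel D1 Q1 D2 Q2 = conj_rel D2 Q2 D1 Q1"
  unfolding conj_rel_def by (rule ext) (auto simp only: Un_ac disj_commute)

context
  fixes D1 D2 :: "int set" and Q1 Q2 :: "nat \<Rightarrow> (int \<times> int) set"
  assumes wf1: "action_wf D1 Q1" and wf2: "action_wf D2 Q2" and disj: "D1 \<inter> D2 = {}"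
begin

lemma conj_rel_from_left: "x \<in> insert (-1) D1 \<Longrightarrow> (x, y) \<in> conj_rel D1 Q1 D2 Q2 j \<longleftrightarrow> (x, y) \<in> Q1 j"
  using action_wf_notin[OF wf1] action_wf_notin[OF wf2] action_wf_edge[OF wf1, of x y j]
    action_wf_sink[OF wf1] action_wf_sink[OF wf2] disj
  unfolding conj_rel_def uQ_def Ev_def by auto

lemma reach_conj_rel_left:
  "x \<in> insert (-1) D1 \<Longrightarrow> reach (conj_rel D1 Q1 D2 Q2) x s y \<longleftrightarrow> reach Q1 x s y"
  by (rule reach_cong_closed[where S = "insert (-1) D1"])
    (auto dest: action_wf_edge[OF wf1] simp: conj_rel_from_left)

lemma conj_rel_from_0:
  "(0, k) \<in> conj_rel D1 Q1 D2 Q2 j \<longleftrightarrow> (0, k) \<in> Q1 j \<and> k \<in> D1 \<or> (0, k) \<in> Q2 j \<and> k \<in> D2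
     \<or> k = -1 \<and> (\<forall>k'\<in>D1. (0, k') \<notin> Q1 j) \<and> (\<forall>k'\<in>D2. (0, k') \<notin> Q2 j)"
proof -
  have "(0, k) \<in> Q1 j \<and> k \<in> D1 \<union> D2 \<longleftrightarrow> (0, k) \<in> Q1 j \<and> k \<in> D1"
    and "(0, k) \<in> Q2 j \<and> k \<in> D1 \<union> D2 \<longleftrightarrow> (0, k) \<in> Q2 j \<and> k \<in> D2" for k
    using action_wf_edge[OF wf1, of 0 k j] action_wf_edge[OF wf2, of 0 k j]
      action_wf_notin[OF wf1] action_wf_notin[OF wf2] disj by blast+
  moreover have "(0, k) \<in> conj_rel D1 Q1 D2 Q2 j \<longleftrightarrow> (0, k) \<in> Q1 j \<union> Q2 j \<and> k \<in> D1 \<union> D2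
      \<or> k = -1 \<and> \<not> (\<exists>k'. (0, k') \<in> Q1 j \<union> Q2 j \<and> k' \<in> D1 \<union> D2)"
    unfolding conj_rel_def uQ_def by auto
  ultimately show ?thesis by blast
qed

lemma action_wf_conj_rel: "action_wf (D1 \<union> D2) (conj_rel D1 Q1 D2 Q2)"
proof -
  have "conj_rel D1 Q1 D2 Q2 j \<subseteq> Ev (D1 \<union> D2) \<times> insert (-1) (D1 \<union> D2)" for j
    using action_wf_edge[OF wf1] action_wf_edge[OF wf2] unfolding conj_rel_def uQ_def Ev_def by auto
  moreover have "(-1, y) \<in> conj_rel D1 Q1 D2 Q2 j \<longleftrightarrow> y = -1" for j y
    using conj_rel_from_left[of "-1"] action_wf_sink[OF wf1] by simp
  ultimately show ?thesis
    using action_wf_pos[OF wf1] action_wf_pos[OF wf2] unfolding action_wf_def by auto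
qed

lemma root_agents_conj_rel:
  "root_agents Q1 T1 \<Longrightarrow> root_agents Q2 T2 \<Longrightarrow> root_agents (conj_rel D1 Q1 D2 Q2) (T1 \<union> T2)"
  unfolding root_agents_def conj_rel_from_0 by blast

lemma live_conj_rel:
  assumes "live Q1 a" "root_agents Q1 T1" "root_agents Q2 T2" "T1 \<inter> T2 = {}"
  shows "live (conj_rel D1 Q1 D2 Q2) a"
proof (cases a)
  case (Cons j r)
  have "j \<in> T1" using live_hd[OF wf1 assms(2)] assms(1) Cons by blast
  with assms(3,4) have no_right: "(0, k) \<in> Q2 j \<Longrightarrow> k = -1" for k
    unfolding root_agents_def by blast
  from assms(1) obtain e0 where "reach Q1 0 a e0" "e0 \<noteq> -1"
    unfolding live_def by blast
  with Cons obtain z0 where z0: "(0, z0) \<in> Q1 j" "reach Q1 z0 r e0"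
    by auto
  with \<open>e0 \<noteq> -1\<close> have "z0 \<in> D1"
    using reach_sink[OF wf1] action_wf_edge[OF wf1] by blast
  have "(0, k) \<in> conj_rel D1 Q1 D2 Q2 j \<longleftrightarrow> (0, k) \<in> Q1 j \<and> k \<in> D1" for k
    using conj_rel_from_0 no_right z0(1) \<open>z0 \<in> D1\<close> action_wf_notin[OF wf2] by auto
  then have reach_iff:
    "reach (conj_rel D1 Q1 D2 Q2) 0 a e \<longleftrightarrow> (\<exists>k\<in>D1. (0, k) \<in> Q1 j \<and> reach Q1 k r e)" for e
    using Cons reach_conj_rel_left by auto
  have "reach (conj_rel D1 Q1 D2 Q2) 0 a e0"
    using reach_iff z0 \<open>z0 \<in> D1\<close> by blast
  moreover have "e \<noteq> -1" if "reach (conj_rel D1 Q1 D2 Q2) 0 a e" for e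
    using that reach_iff assms(1) Cons unfolding live_def by auto
  ultimately show ?thesis unfolding live_def by blast
qed simp

end

lemma reach_conj_rel_cases:
  assumes wf1: "action_wf D1 Q1" and wf2: "action_wf D2 Q2" and disj: "D1 \<inter> D2 = {}"
    and "reach (conj_rel D1 Q1 D2 Q2) 0 s e" "e \<noteq> -1"
  shows "s = [] \<and> e = 0 \<or> reach Q1 0 s e \<and> e \<in> D1 \<or> reach Q2 0 s e \<and> e \<in> D2"
proof (cases s)
  case (Cons j t)
  have disj': "D2 \<inter> D1 = {}" using disj by blast
  note reach_left = reach_conj_rel_left[OF wf1 wf2 disj]
  note reach_right = reach_conj_rel_left[OF wf2 wf1 disj', folded conj_rel_commute]
  from assms(4) Cons obtain z where
    z: "(0, z) \<in> conj_rel D1 Q1 D2 Q2 j" "reach (conj_rel D1 Q1 D2 Q2) z t e"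
    by auto
  have "z \<noteq> -1" using z(2) reach_left[of "-1"] reach_sink[OF wf1] assms(5) by auto
  with z(1) consider "(0, z) \<in> Q1 j" "z \<in> D1" | "(0, z) \<in> Q2 j" "z \<in> D2"
    unfolding conj_rel_from_0[OF wf1 wf2 disj] by blast
  then show ?thesis
  proof cases
    case 1
    with z(2) Cons have "reach Q1 0 s e" using reach_left by auto
    then show ?thesis using Cons assms(5) reach_Cons_target[OF wf1] by blast
  next
    case 2
    with z(2) Cons have "reach Q2 0 s e" using reach_right by auto
    then show ?thesis using Cons assms(5) reach_Cons_target[OF wf2] by blast
  qed
qed (use assms(4) in simp)

lemma labels_unique_conj_rel:
  assumes "action_wf D1 Q1" "action_wf D2 Q2" "D1 \<inter> D2 = {}" "labels_unique Q1" "labels_unique Q2"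
  shows "labels_unique (conj_rel D1 Q1 D2 Q2)"
  unfolding labels_unique_def
proof (intro allI impI)
  fix e s t
  assume "e \<noteq> -1" "distinct_adj s" "distinct_adj t"
    and "reach (conj_rel D1 Q1 D2 Q2) 0 s e" "reach (conj_rel D1 Q1 D2 Q2) 0 t e"
  with reach_conj_rel_cases[OF assms(1-3)]
  have "s = [] \<and> e = 0 \<or> reach Q1 0 s e \<and> e \<in> D1 \<or> reach Q2 0 s e \<and> e \<in> D2"
    and "t = [] \<and> e = 0 \<or> reach Q1 0 t e \<and> e \<in> D1 \<or> reach Q2 0 t e \<and> e \<in> D2"
    by blast+
  with assms \<open>e \<noteq> -1\<close> \<open>distinct_adj s\<close> \<open>distinct_adj t\<close> action_wf_notin[OF assms(1)]
    action_wf_notin[OF assms(2)]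
  show "s = t" unfolding labels_unique_def by blast
qed

lemma privatizing_conj_rel:
  assumes "privatizing D1 Q1 T1 A1" "privatizing D2 Q2 T2 A2" "D1 \<inter> D2 = {}" "T1 \<inter> T2 = {}"
  shows "privatizing (D1 \<union> D2) (conj_rel D1 Q1 D2 Q2) (T1 \<union> T2) (A1 \<union> A2)"
proof -
  have wf1: "action_wf D1 Q1" and wf2: "action_wf D2 Q2"
    and T1: "root_agents Q1 T1" and T2: "root_agents Q2 T2"
    using assms(1,2) by (simp_all add: privatizing_def)
  have disj': "D2 \<inter> D1 = {}" "T2 \<inter> T1 = {}" using assms(3,4) by blast+
  have "live (conj_rel D1 Q1 D2 Q2) a" if "a \<in> A1 \<union> A2" for a
    using that assms live_conj_rel[OF wf1 wf2 assms(3) _ T1 T2 assms(4)]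
      live_conj_rel[OF wf2 wf1 disj'(1) _ T2 T1 disj'(2), folded conj_rel_commute]
    unfolding privatizing_def by blast
  then show ?thesis
    using assms action_wf_conj_rel[OF wf1 wf2 assms(3)] root_agents_conj_rel[OF wf1 wf2 assms(3) T1 T2]
      labels_unique_conj_rel[OF wf1 wf2 assms(3)]
    unfolding privatizing_def by blast
qed

section \<open>Words along the modal syntactic tree\<close>

definition path_words :: "mtree \<Rightarrow> nat list set" where
  "path_words t = agSeq ` {p. dpath t p}"

lemma dpath_Cons_iff: "dpath t (x # p) \<longleftrightarrow> x = t \<and> (p = [] \<or> (\<exists>c\<in>set (children t). dpath c p))"
  by (auto elim: dpath.cases intro: dpath.intros)

lemma dpath_hd: "dpath t p \<Longrightarrow> \<exists>q. p = t # q"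
  by (auto elim: dpath.cases)

lemma path_words_eq:
  "path_words t = insert [] (\<Union>c\<in>set (children t). (#) (the (lab c)) ` path_words c)"
proof -
  have paths: "{p. dpath t p} = insert [t] (\<Union>c\<in>set (children t). (#) t ` {p. dpath c p})"
  proof (intro equalityI subsetI)
    fix p
    assume "p \<in> {p. dpath t p}"
    then obtain q where "p = t # q" "dpath t (t # q)"
      using dpath_hd by blast
    then show "p \<in> insert [t] (\<Union>c\<in>set (children t). (#) t ` {p. dpath c p})"
      by (auto simp: dpath_Cons_iff)
  qed (auto simp: dpath_Cons_iff)
  have "agSeq (t # p) = the (lab c) # agSeq p" if "dpath c p" for c p
    using dpath_hd[OF that] by (auto simp: agSeq_def)
  then show ?thesis
    unfolding path_words_def paths by (auto simp: agSeq_def[of "[t]"] image_UN image_image)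
qed

lemma Nil_in_path_words: "[] \<in> path_words t"
  by (subst path_words_eq) simp

lemma path_words_cong: "children t = children t' \<Longrightarrow> path_words t = path_words t'"
  by (metis path_words_eq)

lemma children_mtreeOf_prop: "is_prop \<xi> \<Longrightarrow> children (mtreeOf \<xi>) = []"
  by (induction \<xi>) auto

lemma relabel_eq: "relabel i t = MNode (Some i) (children t)"
  by (cases t) simp

lemma children_mtreeOf_Bel: "children (mtreeOf (Bel i \<phi>)) = [MNode (Some i) (children (mtreeOf \<phi>))]"
  by (cases \<phi>) (auto simp: children_mtreeOf_prop relabel_eq)

lemma path_words_mtreeOf_Bel:
  "path_words (mtreeOf (Bel i \<phi>)) = insert [] ((#) i ` path_words (mtreeOf \<phi>))"
proof -
  have "path_words (MNode (Some i) (children (mtreeOf \<phi>))) = path_words (mtreeOf \<phi>)"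
    by (rule path_words_cong) simp
  then show ?thesis
    by (subst path_words_eq) (simp add: children_mtreeOf_Bel)
qed

lemma path_words_mtreeOf_Conj:
  "path_words (mtreeOf (Conj \<phi> \<psi>)) = path_words (mtreeOf \<phi>) \<union> path_words (mtreeOf \<psi>)"
  unfolding path_words_eq[of "mtreeOf (Conj \<phi> \<psi>)"] path_words_eq[of "mtreeOf \<phi>"]
    path_words_eq[of "mtreeOf \<psi>"]
  by auto

lemma path_words_mtreeOf_prop: "is_prop \<xi> \<Longrightarrow> path_words (mtreeOf \<xi>) = {[]}"
  by (subst path_words_eq) (simp add: children_mtreeOf_prop)

lemma Uphi_pre_0: "Uphi \<phi> D Q pre \<Longrightarrow> pre 0 = top"
  by (induction rule: Uphi.induct) auto

lemma Uphi_not_prop: "Uphi \<phi> D Q pre \<Longrightarrow> \<not> is_prop \<phi>"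
  by (induction rule: Uphi.induct) auto

lemma dbi_normal_not_prop: "dbi_normal \<phi> \<Longrightarrow> \<not> is_prop \<phi>"
  by (induction rule: dbi_normal.induct) auto

lemma dbi_normal_BelD:
  assumes "dbi_normal (Bel i \<psi>)" "Uphi \<psi> D Q pre"
  shows "dbi_normal \<psi> \<and> i \<notin> ta \<psi>"
  using assms(1)
proof cases
  case (3 \<xi> \<phi>)
  from assms(2) obtain D' Q' pre' where "Uphi \<xi> D' Q' pre'"
    unfolding \<open>\<psi> = Conj \<xi> \<phi>\<close> by (auto elim: Uphi.cases)
  with \<open>is_prop \<xi>\<close> show ?thesis using Uphi_not_prop by blast
qed (use Uphi_not_prop[OF assms(2)] in auto)

lemma dbi_normal_Bel_ConjD:
  assumes "dbi_normal (Bel i (Conj \<xi> \<psi>))" "is_prop \<xi>" "\<not> is_prop \<psi>"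
  shows "dbi_normal \<psi> \<and> i \<notin> ta \<psi>"
  using assms(1)
proof cases
  case 2
  then show ?thesis
    using assms(2) dbi_normal_not_prop by (auto elim: dbi_normal.cases)
qed (use assms(3) in auto)

lemma dbi_normal_ConjD:
  "dbi_normal (Conj \<psi> \<theta>) \<Longrightarrow> dbi_normal \<psi> \<and> dbi_normal \<theta> \<and> ta \<psi> \<inter> ta \<theta> = {}"
  by (auto elim: dbi_normal.cases)

lemma Uphi_privatizing:
  "Uphi \<phi> D Q pre \<Longrightarrow> dbi_normal \<phi> \<Longrightarrow> privatizing D Q (ta \<phi>) (path_words (mtreeOf \<phi>))"
proof (induction rule: Uphi.induct)
  case (base \<xi> m i)
  have "privatizing (insert m {}) (box_rel {} (\<lambda>_. {(0, -1), (-1, -1)}) i m) {i} (insert [] ((#) i ` {[]}))"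
    using privatizing_box_rel[OF privatizing_trivial] base.hyps(2) by blast
  then show ?case
    using base.hyps(1) by (simp add: box_rel_trivial path_words_mtreeOf_Bel path_words_mtreeOf_prop)
next
  case (box \<psi> D Q pre m i)
  with dbi_normal_BelD have "privatizing (insert m D) (box_rel D Q i m) {i}
      (insert [] ((#) i ` path_words (mtreeOf \<psi>)))"
    by (blast intro: privatizing_box_rel)
  then show ?case
    unfolding path_words_mtreeOf_Bel by (simp add: box_rel_def)
next
  case (boxconj \<xi> \<psi> D Q pre m i)
  with dbi_normal_Bel_ConjD Uphi_not_prop have "privatizing (insert m D) (box_rel D Q i m) {i}
      (insert [] ((#) i ` path_words (mtreeOf \<psi>)))"
    by (blast intro: privatizing_box_rel)
  then show ?case
    unfolding path_words_mtreeOf_Bel path_words_mtreeOf_Conj path_words_mtreeOf_prop[OF boxconj.hyps(1)]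
    by (simp add: box_rel_def insert_absorb Nil_in_path_words)
next
  case (conj \<psi> D1 Q1 p1 \<theta> D2 Q2 p2)
  with dbi_normal_ConjD have "privatizing (D1 \<union> D2) (conj_rel D1 Q1 D2 Q2) (ta \<psi> \<union> ta \<theta>)
      (path_words (mtreeOf \<psi>) \<union> path_words (mtreeOf \<theta>))"
    by (blast intro: privatizing_conj_rel)
  then show ?case
    unfolding path_words_mtreeOf_Conj conj_rel_def by simp
qed

lemma reach_of_cluster: "x \<in> cluster (RU n R V D Q pre v \<alpha>) w s \<Longrightarrow> reach Q (snd w) s (snd x)"
  by (induction s arbitrary: w) (auto simp: RU_def)

lemma nsr_distinct_adj: "nsr n s \<Longrightarrow> distinct_adj s"
  by (simp add: nsr_def distinct_adj_conv_nth)

lemma weakly_privatized_RU: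
  assumes "labels_unique Q" and words: "\<forall>a\<in>path_words (mtreeOf \<phi>). distinct_adj a \<and> live Q a"
  shows "weakly_privatized n (RU n R V D Q pre v 0) (v, 0) \<phi>"
  unfolding weakly_privatized_def
proof (intro ballI allI impI)
  fix \<sigma> s
  assume "\<sigma> \<in> RootP \<phi>" and s: "nsr n s \<and> s \<noteq> agSeq \<sigma>"
  let ?C = "cluster (RU n R V D Q pre v 0) (v, 0)"
  show "?C (agSeq \<sigma>) \<inter> ?C s = {}"
  proof (rule equals0I)
    fix x
    assume "x \<in> ?C (agSeq \<sigma>) \<inter> ?C s"
    then have "reach Q 0 (agSeq \<sigma>) (snd x)" "reach Q 0 s (snd x)"
      using reach_of_cluster by fastforce+
    moreover have "distinct_adj (agSeq \<sigma>)" "live Q (agSeq \<sigma>)"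
      using words \<open>\<sigma> \<in> RootP \<phi>\<close> by (simp_all add: path_words_def RootP_def)
    ultimately have "s = agSeq \<sigma>"
      using assms(1) nsr_distinct_adj s unfolding labels_unique_def live_def by blast
    with s show False by blast
  qed
qed

theorem theorem10:
  fixes n :: nat and \<phi> :: "'p fm"
    and R :: "nat \<Rightarrow> ('s \<times> 's) set" and V :: "'p \<Rightarrow> 's set" and v :: 's
    and D :: "int set" and Q :: "nat \<Rightarrow> (int \<times> int) set" and pre :: "int \<Rightarrow> 'p fm"
  assumes "n > 1"
    and "agents \<phi> \<subseteq> {1..n}"
    and "dbi_normal \<phi>"
    and "Uphi \<phi> D Q pre"
  shows "sat R V v (pre 0)
    \<and> weakly_privatized n (RU n R V D Q pre v 0) (v, 0) \<phi>"
proof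
  show "sat R V v (pre 0)"
    using Uphi_pre_0[OF assms(4)] by (simp add: top_def)
  have "privatizing D Q (ta \<phi>) (path_words (mtreeOf \<phi>))"
    using Uphi_privatizing[OF assms(4,3)] .
  then show "weakly_privatized n (RU n R V D Q pre v 0) (v, 0) \<phi>"
    by (intro weakly_privatized_RU) (auto simp: privatizing_def)
qed

end
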